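(* Let $\alpha=(\alpha_1,\ldots,\alpha_n)$ be a composition, $\sigma\in S_n$, and $i\in\{1,\ldots,n-1\}$ with $\alpha_i=\alpha_{i+1}$. Let $T\in\mathrm{NAF}(\alpha,\sigma)$ and let $U=\Omega_{0,h}(T)$ for some $h\in\{0,\ldots,\alpha_i\}$, and suppose $U$ is non-attacking. Then $$\mathrm{wt}_{h}(U)\,(1-\rho_h(U))=\mathrm{wt}_{h}(T)\,(1-\rho_h(T)).$$
   Context: Permutations are in one-line notation; $\sigma s_i$ is $\sigma$ with the entries in positions $i,i+1$ exchanged. A composition is a sequence of nonnegative integers. The skyline diagram is $\mathrm{dg}(\alpha)=\{(j,r):1\le j\le n,\ 1\le r\le\alpha_j\}$ ($j$ = column, $r$ = row) and the augmented diagram is $\mathrm{adg}(\alpha)=\mathrm{dg}(\alpha)\cup\{(j,0):1\le j\le n\}$ (row $0$ is the basement). For $u=(j,r)\in\mathrm{dg}(\alpha)$: $\mathrm{south}(u)=(j,r-1)$; $\mathrm{leg}(u)=\alpha_j-r$; the left arm set is $\{(j',r-1)\in\mathrm{adg}(\alpha):j'<j,\ \alpha_{j'}<\alpha_j\}$, the right arm set is $\{(j',r)\in\mathrm{dg}(\alpha):j'>j,\ \alpha_{j'}\le\alpha_j\}$, $\mathrm{Arm}(u)$ is their union and $\mathrm{arm}(u)=|\mathrm{Arm}(u)|$. Two boxes of $\mathrm{adg}(\alpha)$ attack each other if they are in the same row, or in consecutive rows with the box in the higher row strictly to the right of the box in the lower row. A filling of shape $\alpha$ and basement $\tau\in S_n$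 is a map $T:\mathrm{adg}(\alpha)\to\{1,\ldots,n\}$ with $T(j,0)=\tau_j$; $\mathrm{NAF}(\alpha,\tau)$ is the set of non-attacking ones (attacking boxes have distinct entries). For integers $a,b$ let $\chi(a,b)=1$ if $a>b$ and $0$ otherwise, and $\chi(a,b,c)=\chi(a,b)+\chi(b,c)-\chi(a,c)$. For a non-attacking filling $T$: a descent is $u\in\mathrm{dg}(\alpha)$ with $T(u)>T(\mathrm{south}(u))$; a triple is $(u,v,w)$ with $u\in\mathrm{dg}(\alpha)$, $w=\mathrm{south}(u)$, $v\in\mathrm{Arm}(u)$, an inversion triple if $\chi(T(u),T(v),T(w))=1$ and a coinversion triple otherwise. For $r\ge0$, let $\mathrm{maj}_{r+1}(T)=\sum(\mathrm{leg}(u)+1)$ over descents $u$ in row $r+1$, let $\mathrm{coinv}_{r,r+1}(T)$ be the number of coinversion triples $(u,v,w)$ with $u$ in row $r+1$, and $\mathrm{wt}_r(T)=q^{\mathrm{maj}_{r+1}(T)}t^{\mathrm{coinv}_{r,r+1}(T)}\prod_{u\in\mathrm{dg}(\alpha)\text{ in row }r+1,\ T(u)\ne T(\mathrm{south}(u))}\frac{1-t}{1-q^{1+\mathrm{leg}(u)}t^{1+\mathrm{arm}(u)}}$ (empty sums are $0$, empty products $1$). Fix $i$ with $\alpha_i=\alpha_{i+1}$. For a filling $T$ and $0\le r\le\alpha_i$, $\mathrm{swap}_r(T)$ exchanges the entries of boxes $(i,r)$ and $(i+1,r)$, and $\Omega_{0,h}=\mathrm{swap}_h\circ\cdots\circ\mathrm{swap}_0$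 (so $\Omega_{0,h}(T)$ has basement $\sigma s_i$). For a non-attacking filling $T$ (any basement) and $0\le r\le\alpha_i-1$, let $a=T(i,r)$, $b=T(i+1,r)$, $c=T(i,r+1)$, $d=T(i+1,r+1)$, $A=\mathrm{arm}(i+1,r+1)$, $\ell=\mathrm{leg}(i+1,r+1)$, and define $\rho_r(T)\in\mathbb{Q}(q,t)$: if $a,b,c,d$ are distinct, $\rho_r(T)=0$ when $\chi(c,d,a)=\chi(c,d,b)$ and $\rho_r(T)=1$ when $\chi(c,d,a)=\chi(d,c,b)$; if exactly three of them are distinct, then $\rho_r(T)=0$ if $b=c$, $\rho_r(T)=1$ if $b=d$, and $\rho_r(T)=t^{1-\chi(d,a,b)}\frac{1-q^{\ell+1}t^{A+1}}{1-q^{\ell+1}t^{A+2}}$ if $a=c$; if $a=c$ and $b=d$, $\rho_r(T)=1$. By convention $\rho_{\alpha_i}(T)=0$. *)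

theory Defs
  imports Main "HOL-Computational_Algebra.Polynomial" "HOL-Computational_Algebra.Fraction_Field"
    "HOL-Combinatorics.Permutations"
begin

text \<open>A composition of length n is a function alpha :: nat => nat, of which only
the values alpha 1, ..., alpha n matter. Boxes are pairs (column, row). A filling is a function
T :: nat * nat => nat (only its values on the augmented diagram matter). A permutation
sigma in S_n is a function permuting {1..n}; one-line notation sigma_j = sigma j.\<close>

definition dg :: "nat \<Rightarrow> (nat \<Rightarrow> nat) \<Rightarrow> (nat \<times> nat) set" where
  "dg n \<alpha> = {(j, r). 1 \<le> j \<and> j \<le> n \<and> 1 \<le> r \<and> r \<le> \<alpha> j}"

definition adg :: "nat \<Rightarrow> (nat \<Rightarrow> nat) \<Rightarrow> (nat \<times> nat) set" where
  "adg n \<alpha> = dg n \<alpha> \<union> {(j, 0) | j. 1 \<le> j \<and> j \<le> n}"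

definition south :: "nat \<times> nat \<Rightarrow> nat \<times> nat" where
  "south u = (fst u, snd u - 1)"

definition leg :: "(nat \<Rightarrow> nat) \<Rightarrow> nat \<times> nat \<Rightarrow> nat" where
  "leg \<alpha> u = \<alpha> (fst u) - snd u"

definition left_arm :: "nat \<Rightarrow> (nat \<Rightarrow> nat) \<Rightarrow> nat \<times> nat \<Rightarrow> (nat \<times> nat) set" where
  "left_arm n \<alpha> u = {(j', r'). (j', r') \<in> adg n \<alpha> \<and> r' = snd u - 1 \<and> j' < fst u \<and> \<alpha> j' < \<alpha> (fst u)}"

definition right_arm :: "nat \<Rightarrow> (nat \<Rightarrow> nat) \<Rightarrow> nat \<times> nat \<Rightarrow> (nat \<times> nat) set" where
  "right_arm n \<alpha> u = {(j', r'). (j', r') \<in> dg n \<alpha> \<and> r' = snd u \<and> j' > fst u \<and> \<alpha> j' \<le> \<alpha> (fst u)}"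

definition Arm :: "nat \<Rightarrow> (nat \<Rightarrow> nat) \<Rightarrow> nat \<times> nat \<Rightarrow> (nat \<times> nat) set" where
  "Arm n \<alpha> u = left_arm n \<alpha> u \<union> right_arm n \<alpha> u"

definition arm :: "nat \<Rightarrow> (nat \<Rightarrow> nat) \<Rightarrow> nat \<times> nat \<Rightarrow> nat" where
  "arm n \<alpha> u = card (Arm n \<alpha> u)"

definition attacks :: "nat \<times> nat \<Rightarrow> nat \<times> nat \<Rightarrow> bool" where
  "attacks u v \<longleftrightarrow> u \<noteq> v \<and>
     (snd u = snd v
      \<or> (snd v = snd u + 1 \<and> fst v > fst u)
      \<or> (snd u = snd v + 1 \<and> fst u > fst v))"

definition nonattacking :: "nat \<Rightarrow> (nat \<Rightarrow> nat) \<Rightarrow> (nat \<times> nat \<Rightarrow> nat) \<Rightarrow> bool" where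
  "nonattacking n \<alpha> T \<longleftrightarrow>
     (\<forall>u \<in> adg n \<alpha>. \<forall>v \<in> adg n \<alpha>. attacks u v \<longrightarrow> T u \<noteq> T v)"

definition is_filling :: "nat \<Rightarrow> (nat \<Rightarrow> nat) \<Rightarrow> (nat \<Rightarrow> nat) \<Rightarrow> (nat \<times> nat \<Rightarrow> nat) \<Rightarrow> bool" where
  "is_filling n \<alpha> \<tau> T \<longleftrightarrow>
     (\<forall>u \<in> adg n \<alpha>. T u \<in> {1..n}) \<and> (\<forall>j. 1 \<le> j \<and> j \<le> n \<longrightarrow> T (j, 0) = \<tau> j)"

definition NAF :: "nat \<Rightarrow> (nat \<Rightarrow> nat) \<Rightarrow> (nat \<Rightarrow> nat) \<Rightarrow> (nat \<times> nat \<Rightarrow> nat) set" where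
  "NAF n \<alpha> \<tau> = {T. is_filling n \<alpha> \<tau> T \<and> nonattacking n \<alpha> T}"

definition chi :: "nat \<Rightarrow> nat \<Rightarrow> int" where
  "chi a b = (if a > b then 1 else 0)"

definition chi3 :: "nat \<Rightarrow> nat \<Rightarrow> nat \<Rightarrow> int" where
  "chi3 a b c = chi a b + chi b c - chi a c"

definition maj_row :: "nat \<Rightarrow> (nat \<Rightarrow> nat) \<Rightarrow> (nat \<times> nat \<Rightarrow> nat) \<Rightarrow> nat \<Rightarrow> nat" where
  "maj_row n \<alpha> T r =
     (\<Sum>j \<in> {j. (j, r + 1) \<in> dg n \<alpha> \<and> T (j, r + 1) > T (south (j, r + 1))}. leg \<alpha> (j, r + 1) + 1)"

text \<open>Coinversion triples (u, v, w) with u in row r+1: represented by the pair (u, v).\<close>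
definition coinv_row :: "nat \<Rightarrow> (nat \<Rightarrow> nat) \<Rightarrow> (nat \<times> nat \<Rightarrow> nat) \<Rightarrow> nat \<Rightarrow> nat" where
  "coinv_row n \<alpha> T r =
     card {(u, v). u \<in> dg n \<alpha> \<and> snd u = r + 1 \<and> v \<in> Arm n \<alpha> u
                   \<and> chi3 (T u) (T v) (T (south u)) \<noteq> 1}"

definition wt :: "'a::field \<Rightarrow> 'a \<Rightarrow> nat \<Rightarrow> (nat \<Rightarrow> nat) \<Rightarrow> (nat \<times> nat \<Rightarrow> nat) \<Rightarrow> nat \<Rightarrow> 'a" where
  "wt q t n \<alpha> T r =
     q ^ maj_row n \<alpha> T r * t ^ coinv_row n \<alpha> T r *
     (\<Prod>j \<in> {j. (j, r + 1) \<in> dg n \<alpha> \<and> T (j, r + 1) \<noteq> T (south (j, r + 1))}.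
        (1 - t) / (1 - q ^ (1 + leg \<alpha> (j, r + 1)) * t ^ (1 + arm n \<alpha> (j, r + 1))))"

definition swap_row :: "nat \<Rightarrow> nat \<Rightarrow> (nat \<times> nat \<Rightarrow> nat) \<Rightarrow> (nat \<times> nat \<Rightarrow> nat)" where
  "swap_row i r T = T((i, r) := T (i + 1, r), (i + 1, r) := T (i, r))"

fun Omega :: "nat \<Rightarrow> nat \<Rightarrow> (nat \<times> nat \<Rightarrow> nat) \<Rightarrow> (nat \<times> nat \<Rightarrow> nat)" where
  "Omega i 0 T = swap_row i 0 T"
| "Omega i (Suc h) T = swap_row i (Suc h) (Omega i h T)"

text \<open>rho_r(T); the final "else 0" branches are cases that cannot occur for
non-attacking fillings.\<close>
definition rho :: "'a::field \<Rightarrow> 'a \<Rightarrow> nat \<Rightarrow> (nat \<Rightarrow> nat) \<Rightarrow> nat \<Rightarrow> (nat \<times> nat \<Rightarrow> nat) \<Rightarrow> nat \<Rightarrow> 'a" where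
  "rho q t n \<alpha> i T r =
    (let a = T (i, r); b = T (i + 1, r); c = T (i, r + 1); d = T (i + 1, r + 1);
         A = arm n \<alpha> (i + 1, r + 1); l = leg \<alpha> (i + 1, r + 1)
     in if r \<ge> \<alpha> i then 0
        else if card {a, b, c, d} = 4 then
          (if chi3 c d a = chi3 c d b then 0
           else if chi3 c d a = chi3 d c b then 1 else 0)
        else if card {a, b, c, d} = 3 then
          (if b = c then 0
           else if b = d then 1
           else if a = c then
             t powi (1 - chi3 d a b) * ((1 - q ^ (l + 1) * t ^ (A + 1)) / (1 - q ^ (l + 1) * t ^ (A + 2)))
           else 0)
        else if a = c \<and> b = d then 1
        else 0)"

text \<open>The field Q(q,t) of rational functions: fractions of bivariate rational polynomials
(outer variable q, inner variable t).\<close>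
definition qQ :: "rat poly poly fract" where
  "qQ = Fract [:0, 1:] 1"

definition tQ :: "rat poly poly fract" where
  "tQ = Fract [:[:0, 1:]:] 1"

end

theory Submission
  imports Defs
begin

text \<open>The weight wt_h factors over the boxes (j, h+1) of row h+1. The map Omega_{0,h} exchanges
  columns i and i+1 in rows 0..h; since alpha_i = alpha_{i+1}, this permutes the arm of every box
  (j, h+1) with j outside {i, i+1} and fixes the entries in and below that box, so only the
  factors of columns i and i+1 can change. If h = alpha_i these columns have no box in row h+1 and
  rho_h vanishes. Otherwise the two factors and rho_h only depend on the square a b / c d in rows
  h, h+1 and on the entries of the common arm of (i, h+1) and (i+1, h+1). Exchanging a and b
  multiplies the arm contribution by a power of t determined by the relative order of a, b, c, d,
  and the identity follows by distinguishing c = b, c = a and four distinct entries.\<close>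

definition swap_cols :: "nat \<Rightarrow> nat \<Rightarrow> nat \<times> nat \<Rightarrow> nat \<times> nat" where
  "swap_cols i h v = (if snd v \<le> h then (transpose i (i + 1) (fst v), snd v) else v)"

lemma Omega_eq_comp_swap_cols: "Omega i h T = T \<circ> swap_cols i h"
  by (induct h) (auto simp: swap_row_def swap_cols_def transpose_def)

lemma swap_cols_swap_cols [simp]: "swap_cols i h (swap_cols i h v) = v"
  by (simp add: swap_cols_def)

lemma mem_Arm_iff:
  "(j', r') \<in> Arm n \<alpha> (j, r) \<longleftrightarrow> 1 \<le> j' \<and> j' \<le> n \<and>
     (r' = r - 1 \<and> r' \<le> \<alpha> j' \<and> j' < j \<and> \<alpha> j' < \<alpha> j
      \<or> r' = r \<and> 1 \<le> r \<and> r \<le> \<alpha> j' \<and> j < j' \<and> \<alpha> j' \<le> \<alpha> j)"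
  by (auto simp: Arm_def left_arm_def right_arm_def adg_def dg_def)

lemma finite_Arm: "finite (Arm n \<alpha> u)"
proof (rule finite_subset)
  show "Arm n \<alpha> u \<subseteq> {1..n} \<times> {snd u - 1, snd u}"
    by (auto simp: Arm_def left_arm_def right_arm_def adg_def dg_def)
qed auto

lemma bij_betw_swap_cols_Arm:
  assumes "1 \<le> i" "i < n" "\<alpha> i = \<alpha> (i + 1)" "j \<notin> {i, i + 1}"
  shows "bij_betw (swap_cols i h) (Arm n \<alpha> (j, r)) (Arm n \<alpha> (j, r))"
proof -
  have "swap_cols i h (j', r') \<in> Arm n \<alpha> (j, r)" if "(j', r') \<in> Arm n \<alpha> (j, r)" for j' r'
  proof -
    let ?j = "transpose i (i + 1) j'"
    have "?j < j \<longleftrightarrow> j' < j" "j < ?j \<longleftrightarrow> j < j'" "\<alpha> ?j = \<alpha> j'"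
      "1 \<le> ?j \<and> ?j \<le> n \<longleftrightarrow> 1 \<le> j' \<and> j' \<le> n"
      using assms by (auto simp: transpose_def)
    then show ?thesis
      using that by (auto simp: swap_cols_def mem_Arm_iff)
  qed
  then have "swap_cols i h ` Arm n \<alpha> (j, r) \<subseteq> Arm n \<alpha> (j, r)"
    by auto
  moreover have "inj_on (swap_cols i h) (Arm n \<alpha> (j, r))"
    by (metis inj_onI swap_cols_swap_cols)
  ultimately show ?thesis
    unfolding bij_betw_def using endo_inj_surj[OF finite_Arm] by blast
qed

lemma Arm_eq_insert_Arm_next_column:
  assumes "1 \<le> i" "i < n" "\<alpha> i = \<alpha> (i + 1)" "1 \<le> r" "r \<le> \<alpha> i"
  shows "Arm n \<alpha> (i, r) = insert (i + 1, r) (Arm n \<alpha> (i + 1, r))"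
  using assms less_Suc_eq by (auto simp: mem_Arm_iff)

lemma not_in_own_Arm: "u \<notin> Arm n \<alpha> u"
  by (auto simp: Arm_def left_arm_def right_arm_def)

lemma finite_row_columns: "finite {j. (j, r) \<in> dg n \<alpha>}"
  by (rule finite_subset[of _ "{1..n}"]) (auto simp: dg_def)

definition coinv_factor :: "'a::field \<Rightarrow> nat \<Rightarrow> nat \<Rightarrow> nat \<Rightarrow> 'a" where
  "coinv_factor t x y z = (if chi3 x y z \<noteq> 1 then t else 1)"

definition col_wt ::
    "'a::field \<Rightarrow> 'a \<Rightarrow> nat \<Rightarrow> (nat \<Rightarrow> nat) \<Rightarrow> (nat \<times> nat \<Rightarrow> nat) \<Rightarrow> nat \<Rightarrow> nat \<Rightarrow> 'a" where
  "col_wt q t n \<alpha> F r j =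
     (if F (j, r + 1) > F (j, r) then q ^ (leg \<alpha> (j, r + 1) + 1) else 1) *
     (\<Prod>v\<in>Arm n \<alpha> (j, r + 1). coinv_factor t (F (j, r + 1)) (F v) (F (j, r))) *
     (if F (j, r + 1) \<noteq> F (j, r)
      then (1 - t) / (1 - q ^ (1 + leg \<alpha> (j, r + 1)) * t ^ (1 + arm n \<alpha> (j, r + 1))) else 1)"

lemma coinv_row_eq_sum:
  "coinv_row n \<alpha> F r = (\<Sum>j | (j, r + 1) \<in> dg n \<alpha>.
      card {v \<in> Arm n \<alpha> (j, r + 1). chi3 (F (j, r + 1)) (F v) (F (j, r)) \<noteq> 1})"
proof -
  let ?J = "{j. (j, r + 1) \<in> dg n \<alpha>}"
  let ?C = "\<lambda>j. {v \<in> Arm n \<alpha> (j, r + 1). chi3 (F (j, r + 1)) (F v) (F (j, r)) \<noteq> 1}"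
  let ?emb = "\<lambda>(j, v). ((j, r + 1), v)"
  have "{(u, v). u \<in> dg n \<alpha> \<and> snd u = r + 1 \<and> v \<in> Arm n \<alpha> u \<and> chi3 (F u) (F v) (F (south u)) \<noteq> 1}
      = ?emb ` Sigma ?J ?C"
    by (auto simp: south_def image_iff)
  moreover have "inj_on ?emb (Sigma ?J ?C)"
    by (auto simp: inj_on_def)
  ultimately show ?thesis
    unfolding coinv_row_def by (simp add: card_image card_SigmaI finite_row_columns finite_Arm)
qed

lemma wt_eq_prod_col_wt:
  "wt q t n \<alpha> F r = (\<Prod>j | (j, r + 1) \<in> dg n \<alpha>. col_wt q t n \<alpha> F r j)"
proof -
  let ?J = "{j. (j, r + 1) \<in> dg n \<alpha>}"
  have maj: "q ^ maj_row n \<alpha> F r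
      = (\<Prod>j\<in>?J. if F (j, r + 1) > F (j, r) then q ^ (leg \<alpha> (j, r + 1) + 1) else 1)"
    unfolding maj_row_def power_sum south_def
    by (simp add: prod.inter_filter[OF finite_row_columns, symmetric] conj_commute)
  have coinv: "t ^ coinv_row n \<alpha> F r
      = (\<Prod>j\<in>?J. \<Prod>v\<in>Arm n \<alpha> (j, r + 1). coinv_factor t (F (j, r + 1)) (F v) (F (j, r)))"
    unfolding coinv_row_eq_sum power_sum coinv_factor_def
    by (simp add: prod.inter_filter[OF finite_Arm, symmetric])
  have den: "(\<Prod>j | (j, r + 1) \<in> dg n \<alpha> \<and> F (j, r + 1) \<noteq> F (south (j, r + 1)).
        (1 - t) / (1 - q ^ (1 + leg \<alpha> (j, r + 1)) * t ^ (1 + arm n \<alpha> (j, r + 1))))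
      = (\<Prod>j\<in>?J. if F (j, r + 1) \<noteq> F (j, r)
          then (1 - t) / (1 - q ^ (1 + leg \<alpha> (j, r + 1)) * t ^ (1 + arm n \<alpha> (j, r + 1))) else 1)"
    unfolding south_def
    by (simp add: prod.inter_filter[OF finite_row_columns, symmetric] conj_commute)
  show ?thesis
    unfolding wt_def maj coinv den col_wt_def prod.distrib ..
qed

lemma col_wt_comp_swap_cols:
  assumes "1 \<le> i" "i < n" "\<alpha> i = \<alpha> (i + 1)" "j \<notin> {i, i + 1}"
  shows "col_wt q t n \<alpha> (F \<circ> swap_cols i h) h j = col_wt q t n \<alpha> F h j"
proof -
  let ?g = "\<lambda>v. coinv_factor t (F (j, h + 1)) (F v) (F (j, h))"
  have "(F \<circ> swap_cols i h) (j, r) = F (j, r)" for r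
    using assms(4) by (simp add: swap_cols_def)
  moreover have "(\<Prod>v\<in>Arm n \<alpha> (j, h + 1). ?g (swap_cols i h v)) = prod ?g (Arm n \<alpha> (j, h + 1))"
    by (rule prod.reindex_bij_betw[OF bij_betw_swap_cols_Arm[OF assms]])
  ultimately show ?thesis
    unfolding col_wt_def by simp
qed

lemma wt_comp_swap_cols_top_row:
  assumes "1 \<le> i" "i < n" "\<alpha> i = \<alpha> (i + 1)"
  shows "wt q t n \<alpha> (F \<circ> swap_cols i (\<alpha> i)) (\<alpha> i) = wt q t n \<alpha> F (\<alpha> i)"
  unfolding wt_eq_prod_col_wt
  using assms by (intro prod.cong refl col_wt_comp_swap_cols) (auto simp: dg_def)

lemma wt_split_pair_columns:
  assumes "1 \<le> i" "i < n" "\<alpha> i = \<alpha> (i + 1)" "h < \<alpha> i"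
  shows "wt q t n \<alpha> F h = (\<Prod>j \<in> {j. (j, h + 1) \<in> dg n \<alpha>} - {i, i + 1}. col_wt q t n \<alpha> F h j)
    * (col_wt q t n \<alpha> F h i * col_wt q t n \<alpha> F h (i + 1))"
proof -
  let ?J = "{j. (j, h + 1) \<in> dg n \<alpha>}"
  have row: "?J = insert i (insert (i + 1) (?J - {i, i + 1}))"
    using assms by (auto simp: dg_def)
  show ?thesis
    unfolding wt_eq_prod_col_wt by (subst row) (simp add: finite_row_columns ac_simps)
qed

text \<open>The factors of columns i and i+1 with entries a, b below c, d: l and A are the leg and arm
  of the right box (the left box has arm A + 1) and P is the contribution of their common arm.\<close>
definition pair_wt :: "'a::field \<Rightarrow> 'a \<Rightarrow> nat \<Rightarrow> nat \<Rightarrow> nat \<Rightarrow> nat \<Rightarrow> nat \<Rightarrow> nat \<Rightarrow> 'a \<Rightarrow> 'a" where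
  "pair_wt q t l A a b c d P =
     (if c > a then q ^ (l + 1) else 1) * (if d > b then q ^ (l + 1) else 1) *
     coinv_factor t c d a * P *
     (if c \<noteq> a then (1 - t) / (1 - q ^ (l + 1) * t ^ (A + 2)) else 1) *
     (if d \<noteq> b then (1 - t) / (1 - q ^ (l + 1) * t ^ (A + 1)) else 1)"

lemma col_wt_pair_eq_pair_wt:
  assumes "1 \<le> i" "i < n" "\<alpha> i = \<alpha> (i + 1)" "r < \<alpha> i"
  shows "col_wt q t n \<alpha> F r i * col_wt q t n \<alpha> F r (i + 1)
    = pair_wt q t (leg \<alpha> (i + 1, r + 1)) (arm n \<alpha> (i + 1, r + 1))
        (F (i, r)) (F (i + 1, r)) (F (i, r + 1)) (F (i + 1, r + 1))
        (\<Prod>v\<in>Arm n \<alpha> (i + 1, r + 1).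
           coinv_factor t (F (i, r + 1)) (F v) (F (i, r)) *
           coinv_factor t (F (i + 1, r + 1)) (F v) (F (i + 1, r)))"
proof -
  have Arm_i: "Arm n \<alpha> (i, r + 1) = insert (i + 1, r + 1) (Arm n \<alpha> (i + 1, r + 1))"
    using assms by (intro Arm_eq_insert_Arm_next_column) auto
  then have "arm n \<alpha> (i, r + 1) = arm n \<alpha> (i + 1, r + 1) + 1"
    by (simp add: arm_def finite_Arm not_in_own_Arm)
  moreover have "leg \<alpha> (i, r + 1) = leg \<alpha> (i + 1, r + 1)"
    using assms(3) by (simp add: leg_def)
  ultimately show ?thesis
    unfolding col_wt_def pair_wt_def Arm_i
    by (simp add: finite_Arm not_in_own_Arm prod.distrib ac_simps)
qed

lemma col_wt_pair_comp_swap_cols: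
  assumes "1 \<le> i" "i < n" "\<alpha> i = \<alpha> (i + 1)" "h < \<alpha> i"
  shows "col_wt q t n \<alpha> (F \<circ> swap_cols i h) h i * col_wt q t n \<alpha> (F \<circ> swap_cols i h) h (i + 1)
    = pair_wt q t (leg \<alpha> (i + 1, h + 1)) (arm n \<alpha> (i + 1, h + 1))
        (F (i + 1, h)) (F (i, h)) (F (i, h + 1)) (F (i + 1, h + 1))
        (\<Prod>v\<in>Arm n \<alpha> (i + 1, h + 1).
           coinv_factor t (F (i, h + 1)) (F v) (F (i + 1, h)) *
           coinv_factor t (F (i + 1, h + 1)) (F v) (F (i, h)))"
proof -
  have "(F \<circ> swap_cols i h) v = F v" if "v \<in> Arm n \<alpha> (i + 1, h + 1)" for v
    using that assms(3) by (cases v) (auto simp: swap_cols_def mem_Arm_iff transpose_def)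
  then show ?thesis
    using col_wt_pair_eq_pair_wt[OF assms, of q t "F \<circ> swap_cols i h"]
    by (simp add: swap_cols_def cong: prod.cong)
qed

lemma nonattacking_square_distinct:
  assumes "nonattacking n \<alpha> F" "1 \<le> i" "i < n" "\<alpha> i = \<alpha> (i + 1)" "r < \<alpha> i"
  shows "F (i, r) \<noteq> F (i + 1, r)" "F (i, r + 1) \<noteq> F (i + 1, r + 1)" "F (i, r) \<noteq> F (i + 1, r + 1)"
proof -
  have "(i, r) \<in> adg n \<alpha>" "(i + 1, r) \<in> adg n \<alpha>" "(i, r + 1) \<in> adg n \<alpha>" "(i + 1, r + 1) \<in> adg n \<alpha>"
    using assms(2-5) by (auto simp: adg_def dg_def)
  moreover have "attacks (i, r) (i + 1, r)" "attacks (i, r + 1) (i + 1, r + 1)" "attacks (i, r) (i + 1, r + 1)"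
    by (simp_all add: attacks_def)
  ultimately show "F (i, r) \<noteq> F (i + 1, r)" "F (i, r + 1) \<noteq> F (i + 1, r + 1)" "F (i, r) \<noteq> F (i + 1, r + 1)"
    using assms(1) unfolding nonattacking_def by blast+
qed

lemma chi3_0_or_1: "chi3 x y z = 0 \<or> chi3 x y z = 1"
  by (auto simp: chi3_def chi_def)

lemma chi3_swap_first: "x \<noteq> y \<Longrightarrow> chi3 y x z = 1 - chi3 x y z"
  by (auto simp: chi3_def chi_def)

lemma coinv_factor_exchange:
  "coinv_factor t c x a * coinv_factor t d x b * t ^ (of_bool (b < c) + of_bool (a < d))
 = coinv_factor t c x b * coinv_factor t d x a * t ^ (of_bool (a < c) + of_bool (b < d))"
proof -
  have power: "coinv_factor t p x r = t ^ of_bool (chi3 p x r \<noteq> 1)" for p r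
    by (simp add: coinv_factor_def)
  \<comment> \<open>as 1 - chi3 p x r = 1 - [p > x] - [x > r] + [p > r], both exponents are symmetric in a and b\<close>
  have "of_bool (chi3 c x a \<noteq> 1) + of_bool (chi3 d x b \<noteq> 1) + (of_bool (b < c) + of_bool (a < d))
      = of_bool (chi3 c x b \<noteq> 1) + of_bool (chi3 d x a \<noteq> 1) + (of_bool (a < c) + of_bool (b < d) :: nat)"
    by (auto simp: chi3_def chi_def)
  then show ?thesis
    unfolding power power_add[symmetric] by (simp only:)
qed

lemma prod_coinv_factor_exchange:
  fixes t :: "'a::field"
  assumes "finite S"
  shows "(\<Prod>v\<in>S. coinv_factor t c (f v) a * coinv_factor t d (f v) b)
           * t ^ (card S * (of_bool (b < c) + of_bool (a < d)))
       = (\<Prod>v\<in>S. coinv_factor t c (f v) b * coinv_factor t d (f v) a)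
           * t ^ (card S * (of_bool (a < c) + of_bool (b < d)))"
proof -
  have split: "(\<Prod>v\<in>S. g v) * t ^ (card S * k) = (\<Prod>v\<in>S. g v * t ^ k)" for g :: "'b \<Rightarrow> 'a" and k :: nat
    by (simp add: prod.distrib power_mult mult.commute[of "card S"])
  show ?thesis
    unfolding split by (rule prod.cong[OF refl coinv_factor_exchange])
qed

definition rho_local :: "'a::field \<Rightarrow> 'a \<Rightarrow> nat \<Rightarrow> nat \<Rightarrow> nat \<Rightarrow> nat \<Rightarrow> nat \<Rightarrow> nat \<Rightarrow> 'a" where
  "rho_local q t a b c d A l =
     (if card {a, b, c, d} = 4 then
        (if chi3 c d a = chi3 c d b then 0
         else if chi3 c d a = chi3 d c b then 1 else 0)
      else if card {a, b, c, d} = 3 then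
        (if b = c then 0
         else if b = d then 1
         else if a = c then
           t powi (1 - chi3 d a b) * ((1 - q ^ (l + 1) * t ^ (A + 1)) / (1 - q ^ (l + 1) * t ^ (A + 2)))
         else 0)
      else if a = c \<and> b = d then 1
      else 0)"

lemma rho_eq_rho_local:
  "rho q t n \<alpha> i F r = (if \<alpha> i \<le> r then 0 else
     rho_local q t (F (i, r)) (F (i + 1, r)) (F (i, r + 1)) (F (i + 1, r + 1))
       (arm n \<alpha> (i + 1, r + 1)) (leg \<alpha> (i + 1, r + 1)))"
  unfolding rho_def rho_local_def Let_def by simp

lemma rho_local_distinct:
  assumes "distinct [a, b, c, d]"
  shows "rho_local q t a b c d A l = (if chi3 c d a = chi3 c d b then 0 else 1)"
proof -
  have "chi3 c d a = chi3 d c b" if "chi3 c d a \<noteq> chi3 c d b"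
    using that assms chi3_swap_first[of c d b] chi3_0_or_1[of c d a] chi3_0_or_1[of c d b] by auto
  moreover have "card {a, b, c, d} = 4"
    using assms by simp
  ultimately show ?thesis
    by (simp add: rho_local_def)
qed

lemma rho_local_b_eq_c:
  assumes "a \<noteq> b" "a \<noteq> d" "b \<noteq> d"
  shows "rho_local q t a b b d A l = 0"
  using assms by (simp add: rho_local_def)

lemma rho_local_a_eq_c:
  assumes "a \<noteq> b" "a \<noteq> d" "b \<noteq> d"
  shows "rho_local q t a b a d A l
    = t powi (1 - chi3 d a b) * ((1 - q ^ (l + 1) * t ^ (A + 1)) / (1 - q ^ (l + 1) * t ^ (A + 2)))"
proof -
  have "card {a, b, a, d} = 3"
    using assms by (simp add: insert_commute)
  then show ?thesis
    using assms by (simp add: rho_local_def)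
qed

lemma pair_wt_rho_local_exchange_b_eq_c:
  fixes q t P P' :: "'a::field"
  assumes "t \<noteq> 0" "1 - q ^ (l + 1) * t ^ (A + 2) \<noteq> 0" "a \<noteq> b" "a \<noteq> d" "b \<noteq> d"
    and arm: "P * t ^ (A * of_bool (a < d)) = P' * t ^ (A * (of_bool (a < b) + of_bool (b < d)))"
  shows "pair_wt q t l A b a b d P' * (1 - rho_local q t b a b d A l)
       = pair_wt q t l A a b b d P * (1 - rho_local q t a b b d A l)"
proof -
  define D where "D = 1 - q ^ (l + 1) * t ^ (A + 2)"
  have rho_T: "rho_local q t a b b d A l = 0"
    using assms by (intro rho_local_b_eq_c)
  have rho_U: "rho_local q t b a b d A l = t powi (1 - chi3 d b a) * ((1 - q ^ (l + 1) * t ^ (A + 1)) / D)"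
    unfolding D_def using assms by (intro rho_local_a_eq_c) auto
  have "coinv_factor t b d b = 1"
    using assms by (simp add: coinv_factor_def chi3_def chi_def)
  consider (inversion) "chi3 d b a = 1" | (coinversion) "chi3 d b a = 0"
    using chi3_0_or_1 by blast
  then show ?thesis
  proof cases
    case inversion
    then have "of_bool (a < b) + of_bool (b < d) = of_bool (a < d) + (1::nat)"
      using assms by (auto simp: chi3_def chi_def split: if_splits)
    then have "P = P' * t ^ A"
      using arm \<open>t \<noteq> 0\<close> by (simp add: algebra_simps power_add)
    moreover have "1 - rho_local q t b a b d A l = q ^ (l + 1) * t ^ (A + 1) * ((1 - t) / D)"
      using rho_U inversion assms(2) unfolding D_def by (simp add: field_simps)
    moreover have "coinv_factor t b d a = t"
      using inversion chi3_swap_first[of d b a] assms by (simp add: coinv_factor_def)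
    ultimately show ?thesis
      using inversion assms \<open>coinv_factor t b d b = 1\<close> unfolding rho_T pair_wt_def D_def[symmetric]
      by (cases "a < b"; cases "b < d"; cases "a < d"; simp add: chi3_def chi_def ac_simps power_add)
  next
    case coinversion
    then have "of_bool (a < b) + of_bool (b < d) = (of_bool (a < d) :: nat)"
      using assms by (auto simp: chi3_def chi_def split: if_splits)
    then have "P = P'"
      using arm \<open>t \<noteq> 0\<close> by simp
    moreover have "1 - rho_local q t b a b d A l = (1 - t) / D"
      using rho_U coinversion assms(2) unfolding D_def by (simp add: field_simps)
    moreover have "coinv_factor t b d a = 1"
      using coinversion chi3_swap_first[of d b a] assms by (simp add: coinv_factor_def)
    ultimately show ?thesis
      using coinversion assms \<open>coinv_factor t b d b = 1\<close> unfolding rho_T pair_wt_def D_def[symmetric]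
      by (cases "a < b"; cases "b < d"; cases "a < d"; simp add: chi3_def chi_def ac_simps power_add)
  qed
qed

lemma pair_wt_rho_local_exchange:
  fixes q t P P' :: "'a::field"
  assumes "t \<noteq> 0" "1 - q ^ (l + 1) * t ^ (A + 2) \<noteq> 0" "a \<noteq> b" "c \<noteq> d" "a \<noteq> d" "b \<noteq> d"
    and arm: "P * t ^ (A * (of_bool (b < c) + of_bool (a < d)))
      = P' * t ^ (A * (of_bool (a < c) + of_bool (b < d)))"
  shows "pair_wt q t l A b a c d P' * (1 - rho_local q t b a c d A l)
       = pair_wt q t l A a b c d P * (1 - rho_local q t a b c d A l)"
proof -
  consider (b_eq_c) "c = b" | (a_eq_c) "c = a" | (distinct) "distinct [a, b, c, d]"
    using assms by auto
  then show ?thesis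
  proof cases
    case b_eq_c
    then show ?thesis
      using pair_wt_rho_local_exchange_b_eq_c[of t q l A a b d P P'] assms by simp
  next
    case a_eq_c
    then show ?thesis
      using pair_wt_rho_local_exchange_b_eq_c[of t q l A b a d P' P] assms by simp
  next
    case distinct
    then have "distinct [b, a, c, d]"
      by auto
    show ?thesis
    proof (cases "chi3 c d a = chi3 c d b")
      case True
      then have "of_bool (b < c) + of_bool (a < d) = (of_bool (a < c) + of_bool (b < d) :: nat)"
        using distinct by (auto simp: chi3_def chi_def split: if_splits)
      then have "P = P'"
        using arm \<open>t \<noteq> 0\<close> by simp
      then show ?thesis
        using True distinct
        unfolding pair_wt_def rho_local_distinct[OF distinct] rho_local_distinct[OF \<open>distinct [b, a, c, d]\<close>]
        by (cases "a < c"; cases "b < c"; cases "a < d"; cases "b < d";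
            simp add: coinv_factor_def chi3_def chi_def)
    next
      case False
      then show ?thesis
        using distinct \<open>distinct [b, a, c, d]\<close> by (simp add: rho_local_distinct)
    qed
  qed
qed

lemma wt_rho_comp_swap_cols_below_top_row:
  fixes q t :: "'a::field"
  assumes "t \<noteq> 0" "\<And>m k. 0 < m \<Longrightarrow> 1 - q ^ m * t ^ k \<noteq> 0"
    and "1 \<le> i" "i < n" "\<alpha> i = \<alpha> (i + 1)" "h < \<alpha> i"
    and "nonattacking n \<alpha> F" "nonattacking n \<alpha> (F \<circ> swap_cols i h)"
  shows "wt q t n \<alpha> (F \<circ> swap_cols i h) h * (1 - rho q t n \<alpha> i (F \<circ> swap_cols i h) h)
       = wt q t n \<alpha> F h * (1 - rho q t n \<alpha> i F h)"
proof -
  let ?G = "F \<circ> swap_cols i h"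
  have other_cols: "(\<Prod>j \<in> {j. (j, h + 1) \<in> dg n \<alpha>} - {i, i + 1}. col_wt q t n \<alpha> ?G h j)
      = (\<Prod>j \<in> {j. (j, h + 1) \<in> dg n \<alpha>} - {i, i + 1}. col_wt q t n \<alpha> F h j)"
    using assms(3-5) by (intro prod.cong refl col_wt_comp_swap_cols) auto
  define a b c d where square: "a = F (i, h)" "b = F (i + 1, h)" "c = F (i, h + 1)" "d = F (i + 1, h + 1)"
  define l A where hook: "l = leg \<alpha> (i + 1, h + 1)" "A = arm n \<alpha> (i + 1, h + 1)"
  define P P' where arm_products:
    "P = (\<Prod>v\<in>Arm n \<alpha> (i + 1, h + 1). coinv_factor t c (F v) a * coinv_factor t d (F v) b)"
    "P' = (\<Prod>v\<in>Arm n \<alpha> (i + 1, h + 1). coinv_factor t c (F v) b * coinv_factor t d (F v) a)"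
  have den: "1 - q ^ (l + 1) * t ^ (A + 2) \<noteq> 0"
    by (rule assms(2)) simp
  have distinct_F: "a \<noteq> b" "c \<noteq> d" "a \<noteq> d"
    using nonattacking_square_distinct[OF assms(7,3-6)] by (auto simp: square)
  have distinct_G: "b \<noteq> d"
    using nonattacking_square_distinct(3)[OF assms(8,3-6)] by (simp add: swap_cols_def square)
  have arm_exchange: "P * t ^ (A * (of_bool (b < c) + of_bool (a < d)))
      = P' * t ^ (A * (of_bool (a < c) + of_bool (b < d)))"
    unfolding arm_products hook arm_def by (rule prod_coinv_factor_exchange[OF finite_Arm])
  have pair_F: "col_wt q t n \<alpha> F h i * col_wt q t n \<alpha> F h (i + 1) = pair_wt q t l A a b c d P"
    unfolding square hook arm_products by (rule col_wt_pair_eq_pair_wt[OF assms(3-6)])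
  have pair_G: "col_wt q t n \<alpha> ?G h i * col_wt q t n \<alpha> ?G h (i + 1) = pair_wt q t l A b a c d P'"
    unfolding square hook arm_products by (rule col_wt_pair_comp_swap_cols[OF assms(3-6)])
  have rho_F: "rho q t n \<alpha> i F h = rho_local q t a b c d A l"
    using assms(6) by (simp add: rho_eq_rho_local square hook)
  have rho_G: "rho q t n \<alpha> i ?G h = rho_local q t b a c d A l"
    using assms(6) by (simp add: rho_eq_rho_local square hook swap_cols_def)
  have "pair_wt q t l A b a c d P' * (1 - rho_local q t b a c d A l)
      = pair_wt q t l A a b c d P * (1 - rho_local q t a b c d A l)"
    by (rule pair_wt_rho_local_exchange[OF assms(1) den distinct_F distinct_G arm_exchange])
  then show ?thesis
    unfolding wt_split_pair_columns[OF assms(3-6)] other_cols pair_F pair_G rho_F rho_G mult.assoc by simp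
qed

lemma Fract_power: "Fract (a::'a::idom) 1 ^ m = Fract (a ^ m) 1"
  by (induct m) (simp_all add: One_fract_def)

lemma one_minus_qQ_tQ_nonzero:
  assumes "0 < m"
  shows "1 - qQ ^ m * tQ ^ k \<noteq> 0"
proof
  assume "1 - qQ ^ m * tQ ^ k = 0"
  define p :: "rat poly poly" where "p = [:0, 1:] ^ m * [:[:0, 1:]:] ^ k"
  have "Fract p 1 = qQ ^ m * tQ ^ k"
    by (simp add: p_def qQ_def tQ_def Fract_power)
  also have "\<dots> = Fract 1 1"
    using \<open>1 - qQ ^ m * tQ ^ k = 0\<close> by (simp add: One_fract_def)
  finally have "Fract p 1 = Fract 1 1" .
  then have "p = 1"
    by (simp add: eq_fract)
  moreover have "degree p = m"
    by (simp add: p_def degree_mult_eq degree_power_eq)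
  ultimately show False
    using assms by simp
qed

lemma tQ_nonzero: "tQ \<noteq> 0"
  by (simp add: tQ_def Zero_fract_def eq_fract)

theorem lemma3p11:
  fixes n i h :: nat and \<alpha> \<sigma> :: "nat \<Rightarrow> nat" and T U :: "nat \<times> nat \<Rightarrow> nat"
  assumes "\<sigma> permutes {1..n}"
    and "1 \<le> i" and "i < n"
    and "\<alpha> i = \<alpha> (i + 1)"
    and "T \<in> NAF n \<alpha> \<sigma>"
    and "h \<le> \<alpha> i"
    and "U = Omega i h T"
    and "nonattacking n \<alpha> U"
  shows "wt qQ tQ n \<alpha> U h * (1 - rho qQ tQ n \<alpha> i U h)
       = wt qQ tQ n \<alpha> T h * (1 - rho qQ tQ n \<alpha> i T h)"
proof -
  have U: "U = T \<circ> swap_cols i h"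
    using assms(7) by (simp add: Omega_eq_comp_swap_cols)
  show ?thesis
  proof (cases "h = \<alpha> i")
    case True
    then show ?thesis
      using wt_comp_swap_cols_top_row[OF assms(2-4), of qQ tQ T] by (simp add: U rho_eq_rho_local)
  next
    case False
    have "nonattacking n \<alpha> T"
      using assms(5) by (simp add: NAF_def)
    with False show ?thesis
      using wt_rho_comp_swap_cols_below_top_row[OF tQ_nonzero one_minus_qQ_tQ_nonzero assms(2-4)]
        assms(6,8) by (simp add: U)
  qed
qed

end
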